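(* Let $U\subset\mathbb{R}^m$ be a bounded domain, $0\le k<n$, and $f\in W^{1,1}(U,\mathbb{R}^n)$. Suppose $$\inf_{\{f_j\}}\int_U\Big(\sup_j\big(|\Lambda^kf_j|+|\Lambda^{k+1}f_j|\big)\Big)\,dx<\infty,$$ where the infimum is over all sequences $\{f_j\}\subset C^1(U,\mathbb{R}^n)$ with $\|f_j-f\|_{W^{1,1}(U)}\to0$. Then $f$ is $k^\dagger$-stable.
   Context: For $f\in W^{1,1}(U,\mathbb{R}^n)$, $|\Lambda^kf|(x)$ is the maximum of the absolute values of all $k\times k$ minors of the Jacobian matrix $Df(x)=(\partial f_\nu/\partial x_\mu)$ ($0$ if $k>\min(m,n)$; $|\Lambda^0f|=1$). For $\alpha=\sum_{i_1<\dots<i_k}a_{i_1\dots i_k}(y)\,dy_{i_1}\wedge\dots\wedge dy_{i_k}$ on $\mathbb{R}^n$, $f^*\alpha=\sum a_{i_1\dots i_k}(f(x))\,df_{i_1}\wedge\dots\wedge df_{i_k}$, $df_\nu=\sum_\mu\frac{\partial f_\nu}{\partial x_\mu}dx_\mu$. $C^1_b(\mathbb{R}^n,\Lambda^k)$: $C^1$ $k$-forms on $\mathbb{R}^n$ with bounded coefficients and bounded first derivatives of coefficients; $C^1_0(U,\Lambda^j)$: $C^1$ forms on $U$ with compactly supported coefficients. $\mathcal{F}^k(U,\mathbb{R}^n)=\{f\in W^{1,1}(U,\mathbb{R}^n): |\Lambda^kf|\in L^1(U)\}$. A sequence $f_j\in\mathcal{F}^k$ converges to $f\in\mathcal{F}^k$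 in the $\tau^k$ topology if $f_j\to f$ in $W^{1,1}$ and $\int_Uf_j^*\alpha\wedge\omega\to\int_Uf^*\alpha\wedge\omega$ for all $\alpha\in C^1_b(\mathbb{R}^n,\Lambda^k)$, $\omega\in C^1_0(U,\Lambda^{m-k})$. For $k<n$, a map $f$ is $k^\dagger$-stable if $f\in\mathcal{F}^k(U,\mathbb{R}^n)\cap\mathcal{F}^{k+1}(U,\mathbb{R}^n)$ and there is a single sequence $f_j\in C^1(U,\mathbb{R}^n)\cap\mathcal{F}^k\cap\mathcal{F}^{k+1}$ converging to $f$ both in the $\tau^k$ topology and in the $\tau^{k+1}$ topology; for $k=n$, $n^\dagger$-stable means $n$-stable (there is a sequence in $C^1(U,\mathbb{R}^n)\cap\mathcal{F}^n$ converging to $f\in\mathcal{F}^n$ in $\tau^n$). *)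

theory Defs
  imports "HOL-Analysis.Analysis"
begin

definition C1_on :: "'a::real_normed_vector set \<Rightarrow> ('a \<Rightarrow> 'b::real_normed_vector) \<Rightarrow> bool" where
  "C1_on S g \<longleftrightarrow> (\<exists>D. (\<forall>x\<in>S. (g has_derivative blinfun_apply (D x)) (at x)) \<and> continuous_on S D)"

definition C1c_on :: "'a::real_normed_vector set \<Rightarrow> ('a \<Rightarrow> real) \<Rightarrow> bool" where
  "C1c_on S g \<longleftrightarrow> C1_on S g \<and> (\<exists>K. compact K \<and> K \<subseteq> S \<and> (\<forall>x\<in>S - K. g x = 0))"

text \<open>D x $ nu $ mu is the weak partial derivative of f_nu with respect to x_mu.\<close>
definition weak_jacobian :: "(real^'m) set \<Rightarrow> (real^'m \<Rightarrow> real^'n) \<Rightarrow> (real^'m \<Rightarrow> real^'m^'n) \<Rightarrow> bool" where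
  "weak_jacobian U f D \<longleftrightarrow>
     (\<forall>\<nu>. set_integrable lebesgue U (\<lambda>x. f x $ \<nu>)) \<and>
     (\<forall>\<nu> \<mu>. set_integrable lebesgue U (\<lambda>x. D x $ \<nu> $ \<mu>)) \<and>
     (\<forall>\<phi> D\<phi>. (\<forall>x\<in>U. (\<phi> has_derivative blinfun_apply (D\<phi> x)) (at x)) \<and> continuous_on U D\<phi> \<and>
          (\<exists>K. compact K \<and> K \<subseteq> U \<and> (\<forall>x\<in>U - K. \<phi> x = 0)) \<longrightarrow>
        (\<forall>\<nu> \<mu>. (LINT x:U|lebesgue. f x $ \<nu> * D\<phi> x (axis \<mu> 1))
               = - (LINT x:U|lebesgue. D x $ \<nu> $ \<mu> * \<phi> x)))"

definition W11 :: "(real^'m) set \<Rightarrow> (real^'m \<Rightarrow> real^'n) \<Rightarrow> bool" where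
  "W11 U f \<longleftrightarrow> (\<exists>D. weak_jacobian U f D)"

definition wjac :: "(real^'m) set \<Rightarrow> (real^'m \<Rightarrow> real^'n) \<Rightarrow> real^'m \<Rightarrow> real^'m^'n" where
  "wjac U f = (SOME D. weak_jacobian U f D)"

definition W11_conv :: "(real^'m) set \<Rightarrow> (nat \<Rightarrow> real^'m \<Rightarrow> real^'n) \<Rightarrow> (real^'m \<Rightarrow> real^'n) \<Rightarrow> bool" where
  "W11_conv U fs f \<longleftrightarrow> W11 U f \<and> (\<forall>j. W11 U (fs j)) \<and>
     (\<lambda>j. LINT x:U|lebesgue. norm (fs j x - f x) + norm (wjac U (fs j) x - wjac U f x)) \<longlonglongrightarrow> 0"

definition det_nat :: "nat \<Rightarrow> (nat \<Rightarrow> nat \<Rightarrow> real) \<Rightarrow> real" where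
  "det_nat k M = (\<Sum>p | p permutes {0..<k}. of_int (sign p) * (\<Prod>i<k. M i (p i)))"

text \<open>|\<Lambda>^k| of a matrix A (rows indexed by 'n, columns by 'm): max of |k x k minors|, 0 if none.\<close>
definition lam :: "nat \<Rightarrow> real^'m^'n \<Rightarrow> real" where
  "lam k A = (let S = {\<bar>det_nat k (\<lambda>i j. A $ r i $ c j)\<bar> | r c.
                  r \<in> {0..<k} \<rightarrow>\<^sub>E UNIV \<and> c \<in> {0..<k} \<rightarrow>\<^sub>E UNIV \<and>
                  inj_on r {0..<k} \<and> inj_on c {0..<k}}
              in if S = {} then 0 else Max S)"

definition Fk :: "nat \<Rightarrow> (real^'m) set \<Rightarrow> (real^'m \<Rightarrow> real^'n) \<Rightarrow> bool" where
  "Fk k U f \<longleftrightarrow> W11 U f \<and> set_integrable lebesgue U (\<lambda>x. lam k (wjac U f x))"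

text \<open>A form at a point: coefficient function on index sets; the coefficient at I
  is the coefficient of dx_{i_1} \<and> ... \<and> dx_{i_p}, i_1 < ... < i_p the elements of I.\<close>

definition shuffle_sign :: "('a::linorder) set \<Rightarrow> 'a set \<Rightarrow> real" where
  "shuffle_sign J K = (-1) ^ card {(j, k). j \<in> J \<and> k \<in> K \<and> k < j}"

definition wedge :: "(('a::{finite,linorder}) set \<Rightarrow> real) \<Rightarrow> ('a set \<Rightarrow> real) \<Rightarrow> ('a set \<Rightarrow> real)" where
  "wedge \<alpha> \<beta> L = (\<Sum>J | J \<subseteq> L. shuffle_sign J (L - J) * \<alpha> J * \<beta> (L - J))"

definition form_one :: "'a set \<Rightarrow> real" where
  "form_one J = (if J = {} then 1 else 0)"

text \<open>df_nu = sum_mu (\<partial>f_nu/\<partial>x_mu) dx_mu, for a Jacobian matrix A at a point.\<close>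
definition dcomp :: "real^'m^'n \<Rightarrow> 'n \<Rightarrow> ('m set \<Rightarrow> real)" where
  "dcomp A \<nu> J = (if \<exists>\<mu>. J = {\<mu>} then A $ \<nu> $ (THE \<mu>. J = {\<mu>}) else 0)"

text \<open>Pullback f^*\<alpha> at x of the k-form with coefficients a I (card I = k), given Jacobian D.\<close>
definition pullback :: "nat \<Rightarrow> (('n::{finite,linorder}) set \<Rightarrow> (real,'n) vec \<Rightarrow> real) \<Rightarrow>
     ((real,'m::{finite,linorder}) vec \<Rightarrow> (real,'n) vec) \<Rightarrow> ((real,'m) vec \<Rightarrow> ((real,'m) vec,'n) vec) \<Rightarrow> (real,'m) vec \<Rightarrow> ('m set \<Rightarrow> real)" where
  "pullback k a f D x L = (\<Sum>I | card I = k. a I (f x) *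
        foldr (\<lambda>i acc. wedge (dcomp (D x) i) acc) (sorted_list_of_set I) form_one L)"

definition hom_form :: "nat \<Rightarrow> ('m set \<Rightarrow> 'p \<Rightarrow> real) \<Rightarrow> 'p \<Rightarrow> ('m set \<Rightarrow> real)" where
  "hom_form p w x K = (if card K = p then w K x else 0)"

text \<open>\<integral>_U f^*\<alpha> \<and> \<omega>: integral of the coefficient of dx_1 \<and> ... \<and> dx_m.\<close>
definition pair_integral :: "nat \<Rightarrow> ((real,'m::{finite,linorder}) vec) set \<Rightarrow> (('n::{finite,linorder}) set \<Rightarrow> (real,'n) vec \<Rightarrow> real) \<Rightarrow>
     ('m set \<Rightarrow> (real,'m) vec \<Rightarrow> real) \<Rightarrow> ((real,'m) vec \<Rightarrow> (real,'n) vec) \<Rightarrow> real" where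
  "pair_integral k U a w f = (LINT x:U|lebesgue.
      wedge (pullback k a f (wjac U f) x) (hom_form (CARD('m) - k) w x) UNIV)"

definition C1b_form :: "nat \<Rightarrow> ('n::{finite,linorder} set \<Rightarrow> (real,'n) vec \<Rightarrow> real) \<Rightarrow> bool" where
  "C1b_form k a \<longleftrightarrow> (\<forall>I. card I = k \<longrightarrow>
      bounded (range (a I)) \<and>
      (\<exists>D. (\<forall>y. (a I has_derivative blinfun_apply (D y)) (at y)) \<and> continuous_on UNIV D \<and> bounded (range D)))"

definition C10_form :: "nat \<Rightarrow> ((real,'m::{finite,linorder}) vec) set \<Rightarrow> ('m set \<Rightarrow> (real,'m) vec \<Rightarrow> real) \<Rightarrow> bool" where
  "C10_form p U w \<longleftrightarrow> (\<forall>K. card K = p \<longrightarrow> C1c_on U (w K))"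

definition tau_conv :: "nat \<Rightarrow> ((real,'m::{finite,linorder}) vec) set \<Rightarrow> (nat \<Rightarrow> (real,'m) vec \<Rightarrow> (real,'n::{finite,linorder}) vec) \<Rightarrow> ((real,'m) vec \<Rightarrow> (real,'n) vec) \<Rightarrow> bool" where
  "tau_conv k U fs f \<longleftrightarrow> Fk k U f \<and> (\<forall>j. Fk k U (fs j)) \<and> W11_conv U fs f \<and>
     (\<forall>a w. C1b_form k a \<and> C10_form (CARD('m) - k) U w \<longrightarrow>
        (\<lambda>j. pair_integral k U a w (fs j)) \<longlonglongrightarrow> pair_integral k U a w f)"

definition k_stable :: "nat \<Rightarrow> ((real,'m::{finite,linorder}) vec) set \<Rightarrow> ((real,'m) vec \<Rightarrow> (real,'n::{finite,linorder}) vec) \<Rightarrow> bool" where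
  "k_stable k U f \<longleftrightarrow> Fk k U f \<and> (\<exists>fs. (\<forall>j. C1_on U (fs j) \<and> Fk k U (fs j)) \<and> tau_conv k U fs f)"

definition dagger_stable :: "nat \<Rightarrow> ((real,'m::{finite,linorder}) vec) set \<Rightarrow> ((real,'m) vec \<Rightarrow> (real,'n::{finite,linorder}) vec) \<Rightarrow> bool" where
  "dagger_stable k U f \<longleftrightarrow>
     (if k < CARD('n) then
        Fk k U f \<and> Fk (Suc k) U f \<and>
        (\<exists>fs. (\<forall>j. C1_on U (fs j) \<and> Fk k U (fs j) \<and> Fk (Suc k) U (fs j)) \<and>
              tau_conv k U fs f \<and> tau_conv (Suc k) U fs f)
      else k_stable k U f)"

end

theory Submission
  imports Defs "Jordan_Normal_Form.Determinant"
begin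

(* Choose a C^1 sequence f_j \<rightarrow> f in W^{1,1} whose envelope
   G = sup_j (|\<Lambda>^k f_j| + |\<Lambda>^{k+1} f_j|) is integrable (possible by the
   hypothesis on the infimum).  Passing to a subsequence, f_j \<rightarrow> f and
   Df_j \<rightarrow> Df almost everywhere.  For p \<in> {k, k+1} the integrand of
   \<integral>_U f_j^*\<alpha> \<and> \<omega> is a finite sum of products of bounded continuous
   coefficients of \<alpha> (evaluated at f_j), bounded coefficients of \<omega>, and
   p \<times> p minors of Df_j.  Hence it converges a.e. and is dominated by
   C \<cdot> |\<Lambda>^p f_j| \<le> C \<cdot> G, so dominated convergence yields \<tau>^p convergence;
   the same bound gives |\<Lambda>^p f_j|, |\<Lambda>^p f| \<in> L^1, i.e. membership in F^p. *)

(* Jordan_Normal_Form provides its own vector type and index notation; hide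
   them so that vec and $ refer to the Cartesian vectors of HOL-Analysis. *)
hide_type (open) Matrix.vec
no_notation vec_index (infixl "$" 100)


section \<open>Laplace expansion of det_nat\<close>

(* det_nat is the Leibniz determinant of an n \<times> n array; it coincides with the
   determinant of Jordan_Normal_Form, whose Laplace expansion we reuse. *)
lemma det_nat_eq_det: "det_nat n M = Determinant.det (Matrix.mat n n (\<lambda>(i, j). M i j))"
  unfolding det_nat_def Determinant.det_def
  by (auto intro!: sum.cong prod.cong simp: atLeast0LessThan)

lemma det_nat_0: "det_nat 0 M = 1"
  by (simp add: det_nat_def permutes_empty)

lemma det_nat_Suc:
  "det_nat (Suc p) M = (\<Sum>b<Suc p. (-1)^b * M 0 b *
      det_nat p (\<lambda>i j. M (Suc i) (if j < b then j else Suc j)))"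
proof -
  let ?A = "Matrix.mat (Suc p) (Suc p) (\<lambda>(i, j). M i j)"
  have "det_nat (Suc p) M = (\<Sum>b<Suc p. ?A $$ (0, b) * cofactor ?A 0 b)"
    unfolding det_nat_eq_det by (rule laplace_expansion_row) auto
  also have "\<dots> = (\<Sum>b<Suc p. (-1)^b * M 0 b *
      det_nat p (\<lambda>i j. M (Suc i) (if j < b then j else Suc j)))"
    by (intro sum.cong refl)
      (auto simp: cofactor_def det_nat_eq_det mat_delete_def intro!: arg_cong[where f = Determinant.det])
  finally show ?thesis .
qed

lemma det_nat_cong:
  assumes "\<And>a c. a < n \<Longrightarrow> c < n \<Longrightarrow> M a c = M' a c"
  shows "det_nat n M = det_nat n M'"
  unfolding det_nat_def
proof (intro sum.cong refl arg_cong[where f = "\<lambda>x. _ * x"] prod.cong)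
  fix q i assume "q \<in> {q. q permutes {0..<n}}" "i \<in> {..<n}"
  then show "M i (q i) = M' i (q i)" using assms permutes_in_image[of q "{0..<n}" i] by auto
qed

(* det_nat is a polynomial in the entries, hence continuous ... *)
lemma det_nat_tendsto:
  assumes "\<And>i j. ((\<lambda>t. M t i j) \<longlongrightarrow> M0 i j) F"
  shows "((\<lambda>t. det_nat n (M t)) \<longlongrightarrow> det_nat n M0) F"
  unfolding det_nat_def by (intro tendsto_intros assms)

lemma det_nat_measurable:
  assumes "\<And>i j. (\<lambda>t. M t i j) \<in> borel_measurable N"
  shows "(\<lambda>t. det_nat n (M t)) \<in> borel_measurable N"
  unfolding det_nat_def
  by (intro borel_measurable_sum borel_measurable_times borel_measurable_prod
      borel_measurable_const assms)


lemma sorted_list_of_set_remove_nth: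
  fixes L :: "'a::linorder set"
  assumes "finite L" "b < card L" "c < card L - 1"
  shows "sorted_list_of_set (L - {sorted_list_of_set L ! b}) ! c =
         sorted_list_of_set L ! (if c < b then c else Suc c)"
proof -
  let ?ls = "sorted_list_of_set L"
  have split: "?ls = take b ?ls @ ?ls ! b # drop (Suc b) ?ls"
    using assms by (intro id_take_nth_drop) auto
  have "distinct (take b ?ls @ ?ls ! b # drop (Suc b) ?ls)"
    by (subst split[symmetric]) simp
  then have "?ls ! b \<notin> set (take b ?ls)" by simp
  then have "remove1 (?ls ! b) ?ls = take b ?ls @ drop (Suc b) ?ls"
    using split by (metis remove1.simps(2) remove1_append)
  moreover have "sorted_list_of_set (L - {?ls ! b}) = remove1 (?ls ! b) ?ls"
    using assms(1) by (intro sorted_list_of_set_remove) auto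
  ultimately show ?thesis using assms by (auto simp: nth_append min_def)
qed

lemma card_below_nth_sorted:
  fixes L :: "'a::linorder set"
  assumes "finite L" "b < card L"
  shows "card {k \<in> L. k < sorted_list_of_set L ! b} = b"
proof -
  let ?ls = "sorted_list_of_set L"
  have "{k \<in> L. k < ?ls ! b} = (!) ?ls ` {..<b}"
  proof (intro equalityI subsetI)
    fix k assume k: "k \<in> {k \<in> L. k < ?ls ! b}"
    then obtain c where c: "c < length ?ls" "k = ?ls ! c"
      using assms(1) by (metis (lifting) in_set_conv_nth mem_Collect_eq set_sorted_list_of_set)
    have "c < b"
    proof (rule ccontr)
      assume "\<not> c < b"
      then have "?ls ! b \<le> ?ls ! c" using sorted_nth_mono[of ?ls b c] c by simp
      then show False using k c by auto
    qed
    then show "k \<in> (!) ?ls ` {..<b}" using c by auto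
  next
    fix k assume "k \<in> (!) ?ls ` {..<b}"
    then obtain c where c: "c < b" "k = ?ls ! c" by auto
    then have "?ls ! c \<in> L" using assms nth_mem[of c ?ls] by simp
    moreover have "?ls ! c < ?ls ! b"
      using assms c sorted_wrt_nth_less[of "(<)" ?ls c b] by simp
    ultimately show "k \<in> {k \<in> L. k < ?ls ! b}" using c by simp
  qed
  moreover have "inj_on ((!) ?ls) {..<b}"
    using assms by (intro inj_on_nth) auto
  ultimately show ?thesis by (simp add: card_image)
qed

lemma shuffle_sign_nth:
  fixes L :: "'a::{finite,linorder} set"
  assumes "b < card L"
  shows "shuffle_sign {sorted_list_of_set L ! b} (L - {sorted_list_of_set L ! b}) = (-1)^b"
proof -
  let ?x = "sorted_list_of_set L ! b"
  have "{(j, k). j \<in> {?x} \<and> k \<in> L - {?x} \<and> k < j} = (\<lambda>k. (?x, k)) ` {k \<in> L. k < ?x}"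
    by auto
  then have "card {(j, k). j \<in> {?x} \<and> k \<in> L - {?x} \<and> k < j} = card {k \<in> L. k < ?x}"
    by (simp add: card_image inj_on_def)
  then show ?thesis using card_below_nth_sorted[of L b] assms by (simp add: shuffle_sign_def)
qed


section \<open>Wedge products of differentials are minors\<close>

(* dA_{i_1} \<and> ... \<and> dA_{i_p} for the rows i_1, ..., i_p (listed in xs) of a
   Jacobian matrix A; this is the form appearing in the pullback. *)
definition wedge_rows :: "real^('m::{finite,linorder})^'n \<Rightarrow> 'n list \<Rightarrow> 'm set \<Rightarrow> real" where
  "wedge_rows A xs = foldr (\<lambda>i acc. wedge (dcomp A i) acc) xs form_one"

lemma wedge_dcomp:
  fixes A :: "real^'m::{finite,linorder}^'n"
  shows "wedge (dcomp A i) \<beta> L = (\<Sum>\<mu>\<in>L. shuffle_sign {\<mu>} (L - {\<mu>}) * A $ i $ \<mu> * \<beta> (L - {\<mu>}))"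
proof -
  let ?t = "\<lambda>J. shuffle_sign J (L - J) * dcomp A i J * \<beta> (L - J)"
  have "wedge (dcomp A i) \<beta> L = sum ?t {J. J \<subseteq> L}" by (simp add: wedge_def)
  also have "\<dots> = sum ?t ((\<lambda>\<mu>. {\<mu>}) ` L)"
    by (rule sum.mono_neutral_right) (auto simp: dcomp_def)
  also have "\<dots> = (\<Sum>\<mu>\<in>L. ?t {\<mu>})"
    by (subst sum.reindex) (auto simp: inj_on_def)
  finally show ?thesis by (simp add: dcomp_def)
qed

(* The dx_L coefficient of dA_{i_1} \<and> ... \<and> dA_{i_p} is the minor of A with
   rows i_1, ..., i_p and the columns in L (increasingly ordered); proved by
   expanding the leading factor, i.e. Laplace expansion along the first row. *)
lemma wedge_rows_eq_minor:
  fixes A :: "real^'m::{finite,linorder}^'n"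
  shows "wedge_rows A xs L = (if card L = length xs then
     det_nat (length xs) (\<lambda>a b. A $ (xs ! a) $ (sorted_list_of_set L ! b)) else 0)"
proof (induction xs arbitrary: L)
  case Nil
  then show ?case by (simp add: wedge_rows_def form_one_def det_nat_0)
next
  case (Cons i xs)
  let ?n = "length xs"
  have expand: "wedge_rows A (i # xs) L =
      (\<Sum>\<mu>\<in>L. shuffle_sign {\<mu>} (L - {\<mu>}) * A $ i $ \<mu> * wedge_rows A xs (L - {\<mu>}))"
    by (simp add: wedge_rows_def wedge_dcomp)
  show ?case
  proof (cases "card L = Suc ?n")
    case False
    have "card (L - {\<mu>}) \<noteq> ?n" if "\<mu> \<in> L" for \<mu>
    proof -
      have "0 < card L" using that by (auto simp: card_gt_0_iff)
      then show ?thesis using False that by simp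
    qed
    then show ?thesis using False by (simp add: expand Cons.IH)
  next
    case True
    let ?ls = "sorted_list_of_set L"
    have bij: "bij_betw ((!) ?ls) {..<Suc ?n} L"
      using True by (intro bij_betw_nth) auto
    have term_b: "shuffle_sign {?ls ! b} (L - {?ls ! b}) * A $ i $ (?ls ! b) * wedge_rows A xs (L - {?ls ! b})
        = (-1)^b * A $ ((i # xs) ! 0) $ (?ls ! b) *
          det_nat ?n (\<lambda>a c. A $ ((i # xs) ! Suc a) $ (?ls ! (if c < b then c else Suc c)))"
      if b: "b < Suc ?n" for b
    proof -
      have "?ls ! b \<in> L" using True b nth_mem[of b ?ls] by simp
      then have "card (L - {?ls ! b}) = ?n" using True by simp
      then have "wedge_rows A xs (L - {?ls ! b}) =
          det_nat ?n (\<lambda>a c. A $ (xs ! a) $ (sorted_list_of_set (L - {?ls ! b}) ! c))"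
        using Cons.IH by simp
      also have "\<dots> = det_nat ?n (\<lambda>a c. A $ ((i # xs) ! Suc a) $ (?ls ! (if c < b then c else Suc c)))"
        by (rule det_nat_cong) (use True b in \<open>simp add: sorted_list_of_set_remove_nth\<close>)
      finally show ?thesis using shuffle_sign_nth[of b L] True b by simp
    qed
    have "wedge_rows A (i # xs) L =
      (\<Sum>b<Suc ?n. shuffle_sign {?ls ! b} (L - {?ls ! b}) * A $ i $ (?ls ! b) * wedge_rows A xs (L - {?ls ! b}))"
      unfolding expand by (rule sum.reindex_bij_betw[OF bij, symmetric])
    also have "\<dots> = det_nat (Suc ?n) (\<lambda>a b. A $ ((i # xs) ! a) $ (?ls ! b))"
      unfolding det_nat_Suc by (intro sum.cong refl term_b) simp
    finally show ?thesis using True by simp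
  qed
qed

lemma wedge_rows_tendsto:
  fixes A :: "'t \<Rightarrow> real^'m::{finite,linorder}^'n"
  assumes "\<And>i j. ((\<lambda>t. A t $ i $ j) \<longlongrightarrow> A0 $ i $ j) F"
  shows "((\<lambda>t. wedge_rows (A t) xs L) \<longlongrightarrow> wedge_rows A0 xs L) F"
  unfolding wedge_rows_eq_minor by (auto intro!: det_nat_tendsto assms)

lemma wedge_rows_measurable:
  fixes A :: "'t \<Rightarrow> real^'m::{finite,linorder}^'n"
  assumes "\<And>i j. (\<lambda>t. A t $ i $ j) \<in> borel_measurable N"
  shows "(\<lambda>t. wedge_rows (A t) xs L) \<in> borel_measurable N"
  unfolding wedge_rows_eq_minor
  by (cases "card L = length xs") (auto intro!: det_nat_measurable assms)


definition minor_index :: "nat \<Rightarrow> ((nat \<Rightarrow> 'n::finite) \<times> (nat \<Rightarrow> 'm::finite)) set" where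
  "minor_index k = {(r, c). r \<in> {0..<k} \<rightarrow>\<^sub>E UNIV \<and> c \<in> {0..<k} \<rightarrow>\<^sub>E UNIV \<and>
                  inj_on r {0..<k} \<and> inj_on c {0..<k}}"

definition minor_abs :: "nat \<Rightarrow> real^'m^'n \<Rightarrow> (nat \<Rightarrow> 'n::finite) \<times> (nat \<Rightarrow> 'm::finite) \<Rightarrow> real" where
  "minor_abs k A rc = \<bar>det_nat k (\<lambda>i j. A $ fst rc i $ snd rc j)\<bar>"

lemma finite_minor_index: "finite (minor_index k :: ((nat \<Rightarrow> 'n::finite) \<times> (nat \<Rightarrow> 'm::finite)) set)"
proof (rule finite_subset)
  show "minor_index k \<subseteq> ({0..<k} \<rightarrow>\<^sub>E (UNIV::'n set)) \<times> ({0..<k} \<rightarrow>\<^sub>E (UNIV::'m set))"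
    by (auto simp: minor_index_def)
qed (intro finite_cartesian_product finite_PiE; simp)

lemma lam_eq_Max:
  fixes A :: "real^'m::finite^'n::finite"
  shows "lam k A = (if minor_index k = ({} :: ((nat \<Rightarrow> 'n) \<times> (nat \<Rightarrow> 'm)) set) then 0
                    else Max (minor_abs k A ` minor_index k))"
proof -
  have "{\<bar>det_nat k (\<lambda>i j. A $ r i $ c j)\<bar> | r c.
          r \<in> {0..<k} \<rightarrow>\<^sub>E UNIV \<and> c \<in> {0..<k} \<rightarrow>\<^sub>E UNIV \<and>
          inj_on r {0..<k} \<and> inj_on c {0..<k}} = minor_abs k A ` minor_index k"
    by (auto simp: minor_index_def minor_abs_def image_def)
  then show ?thesis unfolding lam_def Let_def by simp
qed

lemma minor_le_lam:
  fixes A :: "real^'m::finite^'n::finite"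
  shows "rc \<in> minor_index k \<Longrightarrow> minor_abs k A rc \<le> lam k A"
  unfolding lam_eq_Max using finite_minor_index[where 'n='n and 'm='m] by auto

lemma lam_nonneg:
  fixes A :: "real^'m::finite^'n::finite"
  shows "0 \<le> lam k A"
proof (cases "minor_index k = ({} :: ((nat \<Rightarrow> 'n) \<times> (nat \<Rightarrow> 'm)) set)")
  case False
  then obtain rc where "rc \<in> (minor_index k :: ((nat \<Rightarrow> 'n) \<times> (nat \<Rightarrow> 'm)) set)" by auto
  then show ?thesis using minor_le_lam[of rc k A] by (smt (verit) minor_abs_def)
qed (simp add: lam_eq_Max)

lemma wedge_rows_le_lam:
  fixes A :: "real^'m::{finite,linorder}^'n::finite"
  assumes "distinct xs"
  shows "\<bar>wedge_rows A xs L\<bar> \<le> lam (length xs) A"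
proof (cases "card L = length xs")
  case False then show ?thesis using lam_nonneg by (simp add: wedge_rows_eq_minor)
next
  case True
  let ?n = "length xs"
  define r where "r = restrict (\<lambda>a. xs ! a) {0..<?n}"
  define c where "c = restrict (\<lambda>b. sorted_list_of_set L ! b) {0..<?n}"
  have "(r, c) \<in> minor_index ?n"
    unfolding minor_index_def r_def c_def using assms True
    by (auto simp: inj_on_def nth_eq_iff_index_eq)
  moreover have "minor_abs ?n A (r, c) = \<bar>wedge_rows A xs L\<bar>"
    unfolding minor_abs_def wedge_rows_eq_minor using True
    by (simp, intro arg_cong[where f = abs] det_nat_cong) (simp add: r_def c_def)
  ultimately show ?thesis using minor_le_lam by metis
qed

lemma tendsto_Max_image:
  fixes g :: "'t \<Rightarrow> 'i \<Rightarrow> real"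
  assumes "finite R" "R \<noteq> {}" "\<And>i. i \<in> R \<Longrightarrow> ((\<lambda>t. g t i) \<longlongrightarrow> g0 i) F"
  shows "((\<lambda>t. Max (g t ` R)) \<longlongrightarrow> Max (g0 ` R)) F"
  using assms
proof (induction R rule: finite_ne_induct)
  case (insert x R)
  then have "((\<lambda>t. max (g t x) (Max (g t ` R))) \<longlongrightarrow> max (g0 x) (Max (g0 ` R))) F"
    by (intro tendsto_max) auto
  then show ?case using insert by simp
qed simp

lemma lam_tendsto:
  fixes A :: "'t \<Rightarrow> real^'m::finite^'n::finite"
  assumes "\<And>i j. ((\<lambda>t. A t $ i $ j) \<longlongrightarrow> A0 $ i $ j) F"
  shows "((\<lambda>t. lam k (A t)) \<longlongrightarrow> lam k A0) F"
  unfolding lam_eq_Max minor_abs_def using finite_minor_index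
  by (auto intro!: tendsto_Max_image tendsto_rabs det_nat_tendsto assms)

lemma lam_measurable:
  fixes A :: "'t \<Rightarrow> real^'m::finite^'n::finite"
  assumes "\<And>i j. (\<lambda>t. A t $ i $ j) \<in> borel_measurable N"
  shows "(\<lambda>t. lam k (A t)) \<in> borel_measurable N"
  unfolding lam_eq_Max minor_abs_def using finite_minor_index
  by (cases "minor_index k = ({} :: ((nat \<Rightarrow> 'n) \<times> (nat \<Rightarrow> 'm)) set)")
    (auto intro!: borel_measurable_Max borel_measurable_abs det_nat_measurable assms)


(* The integrand of pair_integral at x, as a function of the value y = f x
   and of the Jacobian A = Df x. *)
definition pair_integrand :: "nat \<Rightarrow> (('n::{finite,linorder}) set \<Rightarrow> (real,'n) vec \<Rightarrow> real) \<Rightarrow>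
   (('m::{finite,linorder}) set \<Rightarrow> (real,'m) vec \<Rightarrow> real) \<Rightarrow>
   (real,'n) vec \<Rightarrow> ((real,'m) vec,'n) vec \<Rightarrow> (real,'m) vec \<Rightarrow> real" where
  "pair_integrand p a w y A x = wedge (\<lambda>L. \<Sum>I | card I = p. a I y * wedge_rows A (sorted_list_of_set I) L)
      (hom_form (CARD('m) - p) w x) UNIV"

lemma pair_integral_eq:
  "pair_integral p U a w g = (LINT x:U|lebesgue. pair_integrand p a w (g x) (wjac U g x) x)"
  unfolding pair_integral_def pullback_def pair_integrand_def wedge_rows_def ..

lemma pair_integrand_tendsto:
  fixes A :: "'t \<Rightarrow> real^'m::{finite,linorder}^'n::{finite,linorder}"
  assumes "\<And>I. card I = p \<Longrightarrow> isCont (a I) y"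
    and "(Y \<longlongrightarrow> y) F"
    and "\<And>i j. ((\<lambda>t. A t $ i $ j) \<longlongrightarrow> A0 $ i $ j) F"
  shows "((\<lambda>t. pair_integrand p a w (Y t) (A t) x) \<longlongrightarrow> pair_integrand p a w y A0 x) F"
  unfolding pair_integrand_def wedge_def
  by (intro tendsto_sum tendsto_mult tendsto_const wedge_rows_tendsto assms(3)
      isCont_tendsto_compose[OF assms(1) assms(2)]) simp

lemma pair_integrand_measurable:
  fixes A :: "(real,'m::{finite,linorder}) vec \<Rightarrow> ((real,'m) vec,'n::{finite,linorder}) vec"
  assumes "\<And>I. card I = p \<Longrightarrow> continuous_on UNIV (a I)"
    and "Y \<in> borel_measurable N"
    and "\<And>i j. (\<lambda>t. A t $ i $ j) \<in> borel_measurable N"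
    and "\<And>K. card K = CARD('m) - p \<Longrightarrow> w K \<in> borel_measurable N"
  shows "(\<lambda>t. pair_integrand p a w (Y t) (A t) t) \<in> borel_measurable N"
  unfolding pair_integrand_def wedge_def
proof (intro borel_measurable_sum borel_measurable_times borel_measurable_const
    wedge_rows_measurable assms(3))
  fix I :: "'n set" assume "I \<in> {I. card I = p}"
  then have "a I \<in> borel_measurable borel"
    using assms(1) by (intro borel_measurable_continuous_onI) auto
  then show "(\<lambda>t. a I (Y t)) \<in> borel_measurable N"
    using assms(2) by (rule measurable_compose[rotated])
next
  fix J :: "'m set"
  show "(\<lambda>t. hom_form (CARD('m) - p) w t (UNIV - J)) \<in> borel_measurable N"
    using assms(4) by (cases "card (UNIV - J) = CARD('m) - p") (auto simp: hom_form_def)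
qed

lemma pair_integrand_bound:
  fixes A :: "real^'m::{finite,linorder}^'n::{finite,linorder}"
  assumes "\<And>I. card I = p \<Longrightarrow> \<bar>a I y\<bar> \<le> Ba"
    and "\<And>K. card K = CARD('m) - p \<Longrightarrow> \<bar>w K x\<bar> \<le> Bw"
    and "0 \<le> Bw"
  shows "\<bar>pair_integrand p a w y A x\<bar> \<le>
     2 ^ CARD('m) * real (card {I::'n set. card I = p}) * Ba * Bw * lam p A"
proof -
  let ?P = "\<lambda>L. \<Sum>I | card I = p. a I y * wedge_rows A (sorted_list_of_set I) L"
  let ?H = "hom_form (CARD('m) - p) w x"
  let ?c = "real (card {I::'n set. card I = p}) * Ba * lam p A"
  have P: "\<bar>?P L\<bar> \<le> ?c" for L
  proof -
    have "\<bar>?P L\<bar> \<le> (\<Sum>I | card I = p. \<bar>a I y * wedge_rows A (sorted_list_of_set I) L\<bar>)"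
      by (rule sum_abs)
    also have "\<dots> \<le> (\<Sum>I::'n set | card I = p. Ba * lam p A)"
    proof (intro sum_mono)
      fix I :: "'n set" assume I: "I \<in> {I. card I = p}"
      have "\<bar>wedge_rows A (sorted_list_of_set I) L\<bar> \<le> lam p A"
        using wedge_rows_le_lam[of "sorted_list_of_set I" A L] I by simp
      then show "\<bar>a I y * wedge_rows A (sorted_list_of_set I) L\<bar> \<le> Ba * lam p A"
        unfolding abs_mult using assms(1) I
        by (intro mult_mono) (auto intro: order_trans[OF abs_ge_zero])
    qed
    finally show ?thesis by simp
  qed
  have H: "\<bar>?H K\<bar> \<le> Bw" for K
    using assms(2,3) by (auto simp: hom_form_def)
  have "\<bar>pair_integrand p a w y A x\<bar> \<le>
      (\<Sum>J | J \<subseteq> UNIV. \<bar>shuffle_sign J (UNIV - J) * ?P J * ?H (UNIV - J)\<bar>)"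
    unfolding pair_integrand_def wedge_def by (rule sum_abs)
  also have "\<dots> \<le> (\<Sum>J::'m set | J \<subseteq> UNIV. ?c * Bw)"
  proof (intro sum_mono)
    fix J :: "'m set"
    have "\<bar>shuffle_sign J (UNIV - J)\<bar> = 1" by (simp add: shuffle_sign_def)
    then show "\<bar>shuffle_sign J (UNIV - J) * ?P J * ?H (UNIV - J)\<bar> \<le> ?c * Bw"
      unfolding abs_mult using P[of J] H[of "UNIV - J"]
      by (simp, intro mult_mono) (auto intro: order_trans[OF abs_ge_zero])
  qed
  also have "\<dots> = 2 ^ CARD('m) * real (card {I::'n set. card I = p}) * Ba * Bw * lam p A"
    by (simp add: card_Pow flip: Pow_def)
  finally show ?thesis .
qed


lemma open_sets_lebesgue: "open U \<Longrightarrow> U \<in> sets lebesgue"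
  using borel_open[of U] by (metis sets_completionI_sets sets_lborel)

lemma set_integrable_iff_on:
  fixes g :: "'a::euclidean_space \<Rightarrow> real"
  assumes "U \<in> sets lebesgue"
  shows "set_integrable lebesgue U g \<longleftrightarrow> integrable (lebesgue_on U) g"
  using assms integrable_restrict_space[of U lebesgue g] by (simp add: set_integrable_def)

lemma set_integral_eq_on:
  fixes g :: "'a::euclidean_space \<Rightarrow> real"
  assumes "U \<in> sets lebesgue"
  shows "(LINT x:U|lebesgue. g x) = integral\<^sup>L (lebesgue_on U) g"
  using assms integral_restrict_space[of U lebesgue g] by (simp add: set_lebesgue_integral_def)

lemma set_nn_integral_eq_on:
  "U \<in> sets lebesgue \<Longrightarrow> (\<integral>\<^sup>+ x \<in> U. g x \<partial>lebesgue) = integral\<^sup>N (lebesgue_on U) g"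
  by (subst nn_integral_restrict_space) auto

lemma vec_measurable:
  fixes f :: "'a \<Rightarrow> ('b::euclidean_space)^'n"
  assumes "\<And>i. (\<lambda>x. f x $ i) \<in> borel_measurable M"
  shows "f \<in> borel_measurable M"
  unfolding borel_measurable_euclidean_space[where f=f]
  by (auto simp: Basis_vec_def inner_axis intro!: borel_measurable_inner assms)

lemma W11_facts:
  assumes "U \<in> sets lebesgue" "W11 U g"
  shows "\<And>\<nu>. integrable (lebesgue_on U) (\<lambda>x. g x $ \<nu>)"
    and "\<And>\<nu> \<mu>. integrable (lebesgue_on U) (\<lambda>x. wjac U g x $ \<nu> $ \<mu>)"
    and "\<And>\<nu> \<mu>. (\<lambda>x. wjac U g x $ \<nu> $ \<mu>) \<in> borel_measurable (lebesgue_on U)"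
    and "g \<in> borel_measurable (lebesgue_on U)"
    and "wjac U g \<in> borel_measurable (lebesgue_on U)"
proof -
  have "weak_jacobian U g (wjac U g)"
    using assms(2) unfolding W11_def wjac_def by (metis someI)
  then show g_int: "\<And>\<nu>. integrable (lebesgue_on U) (\<lambda>x. g x $ \<nu>)"
    and D_int: "\<And>\<nu> \<mu>. integrable (lebesgue_on U) (\<lambda>x. wjac U g x $ \<nu> $ \<mu>)"
    using assms(1) by (simp_all add: weak_jacobian_def set_integrable_iff_on)
  show D_meas: "\<And>\<nu> \<mu>. (\<lambda>x. wjac U g x $ \<nu> $ \<mu>) \<in> borel_measurable (lebesgue_on U)"
    using D_int by auto
  then show "wjac U g \<in> borel_measurable (lebesgue_on U)"
    by (intro vec_measurable) auto
  show "g \<in> borel_measurable (lebesgue_on U)"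
    using g_int by (intro vec_measurable) auto
qed


lemma finite_uniform_bound:
  fixes f :: "'i \<Rightarrow> 'x \<Rightarrow> real"
  assumes "finite S" "\<And>i. i \<in> S \<Longrightarrow> \<exists>B. \<forall>x\<in>X. \<bar>f i x\<bar> \<le> B"
  shows "\<exists>B\<ge>0. \<forall>i\<in>S. \<forall>x\<in>X. \<bar>f i x\<bar> \<le> B"
  using assms
proof (induction S rule: finite_induct)
  case (insert i S)
  obtain B where B: "B \<ge> 0" "\<forall>j\<in>S. \<forall>x\<in>X. \<bar>f j x\<bar> \<le> B" using insert by blast
  obtain Bi where Bi: "\<forall>x\<in>X. \<bar>f i x\<bar> \<le> Bi" using insert by blast
  show ?case
    by (rule exI[of _ "max B Bi"]) (use B Bi in \<open>auto intro: le_max_iff_disj[THEN iffD2]\<close>)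
qed auto

lemma C1b_form_coeffs:
  fixes a :: "'n::{finite,linorder} set \<Rightarrow> (real,'n) vec \<Rightarrow> real"
  assumes "C1b_form p a"
  shows "\<And>I. card I = p \<Longrightarrow> continuous_on UNIV (a I)"
    and "\<exists>B\<ge>0. \<forall>I y. card I = p \<longrightarrow> \<bar>a I y\<bar> \<le> B"
proof -
  show "continuous_on UNIV (a I)" if "card I = p" for I
  proof -
    from assms that obtain D where "\<forall>y. (a I has_derivative blinfun_apply (D y)) (at y)"
      unfolding C1b_form_def by blast
    then show ?thesis
      by (intro continuous_at_imp_continuous_on) (auto intro: has_derivative_continuous)
  qed
  have "\<exists>B. \<forall>y\<in>UNIV. \<bar>a I y\<bar> \<le> B" if "I \<in> {I. card I = p}" for I
    using assms that unfolding C1b_form_def bounded_iff by fastforce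
  then show "\<exists>B\<ge>0. \<forall>I y. card I = p \<longrightarrow> \<bar>a I y\<bar> \<le> B"
    using finite_uniform_bound[of "{I. card I = p}" UNIV a] by auto
qed

lemma C1c_on_bounded:
  assumes "C1c_on U g"
  shows "continuous_on U g" "\<exists>B. \<forall>x\<in>U. \<bar>g x\<bar> \<le> B"
proof -
  obtain D where D: "\<forall>x\<in>U. (g has_derivative blinfun_apply (D x)) (at x)"
    using assms unfolding C1c_on_def C1_on_def by blast
  show cont: "continuous_on U g"
    using D by (intro continuous_at_imp_continuous_on) (auto intro: has_derivative_continuous)
  obtain K where K: "compact K" "K \<subseteq> U" "\<forall>x\<in>U - K. g x = 0"
    using assms unfolding C1c_on_def by blast
  have "compact (g ` K)" using K by (intro compact_continuous_image continuous_on_subset[OF cont])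
  then obtain B where B: "\<forall>y\<in>g ` K. norm y \<le> B" using compact_imp_bounded bounded_iff by metis
  have "\<bar>g x\<bar> \<le> \<bar>B\<bar>" if "x \<in> U" for x
    using B K that by (cases "x \<in> K") auto
  then show "\<exists>B. \<forall>x\<in>U. \<bar>g x\<bar> \<le> B" by blast
qed

lemma C10_form_coeffs:
  fixes w :: "'m::{finite,linorder} set \<Rightarrow> (real,'m) vec \<Rightarrow> real"
  assumes "C10_form q U w" "U \<in> sets lebesgue"
  shows "\<And>K. card K = q \<Longrightarrow> w K \<in> borel_measurable (lebesgue_on U)"
    and "\<exists>B\<ge>0. \<forall>K. \<forall>x\<in>U. card K = q \<longrightarrow> \<bar>w K x\<bar> \<le> B"
proof -
  show "w K \<in> borel_measurable (lebesgue_on U)" if "card K = q" for K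
    using assms that C1c_on_bounded(1)[of U "w K"] unfolding C10_form_def
    by (intro continuous_imp_measurable_on_sets_lebesgue) auto
  have "\<exists>B. \<forall>x\<in>U. \<bar>w K x\<bar> \<le> B" if "K \<in> {K. card K = q}" for K
    using assms that C1c_on_bounded(2)[of U "w K"] unfolding C10_form_def by auto
  then show "\<exists>B\<ge>0. \<forall>K. \<forall>x\<in>U. card K = q \<longrightarrow> \<bar>w K x\<bar> \<le> B"
    using finite_uniform_bound[of "{K. card K = q}" U w] by auto
qed


section \<open>A dominated convergence criterion for \<tau>^p convergence\<close>

lemma Fk_if_dominated:
  assumes U: "U \<in> sets lebesgue" and g: "W11 U g"
    and G: "integrable (lebesgue_on U) G"
    and dom: "AE x in lebesgue_on U. lam p (wjac U g x) \<le> G x"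
  shows "Fk p U g"
proof -
  have "integrable (lebesgue_on U) (\<lambda>x. lam p (wjac U g x))"
  proof (rule Bochner_Integration.integrable_bound[OF G])
    show "(\<lambda>x. lam p (wjac U g x)) \<in> borel_measurable (lebesgue_on U)"
      by (rule lam_measurable) (rule W11_facts(3)[OF U g])
    show "AE x in lebesgue_on U. norm (lam p (wjac U g x)) \<le> norm (G x)"
      using dom
    proof eventually_elim
      case (elim x)
      moreover have "0 \<le> lam p (wjac U g x)" by (rule lam_nonneg)
      ultimately show ?case by simp
    qed
  qed
  then show ?thesis using g U by (simp add: Fk_def set_integrable_iff_on)
qed

lemma pair_integral_tendsto:
  fixes f :: "(real,'m::{finite,linorder}) vec \<Rightarrow> (real,'n::{finite,linorder}) vec"
  assumes U: "U \<in> sets lebesgue" and Wf: "W11 U f" and Wj: "\<And>j. W11 U (fs j)"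
    and G: "integrable (lebesgue_on U) G"
    and dom: "AE x in lebesgue_on U. \<forall>j. lam p (wjac U (fs j) x) \<le> G x"
    and cy: "AE x in lebesgue_on U. (\<lambda>j. fs j x) \<longlonglongrightarrow> f x"
    and cD: "AE x in lebesgue_on U. \<forall>\<nu> \<mu>. (\<lambda>j. wjac U (fs j) x $ \<nu> $ \<mu>) \<longlonglongrightarrow> wjac U f x $ \<nu> $ \<mu>"
    and a: "C1b_form p a" and w: "C10_form (CARD('m) - p) U w"
  shows "(\<lambda>j. pair_integral p U a w (fs j)) \<longlonglongrightarrow> pair_integral p U a w f"
proof -
  let ?M = "lebesgue_on U"
  note a_cont = C1b_form_coeffs(1)[OF a]
  obtain Ba where Ba0: "0 \<le> Ba" and Ba: "\<And>I y. card I = p \<Longrightarrow> \<bar>a I y\<bar> \<le> Ba"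
    using C1b_form_coeffs(2)[OF a] by blast
  obtain Bw where Bw0: "0 \<le> Bw" and Bw: "\<And>K x. card K = CARD('m) - p \<Longrightarrow> x \<in> U \<Longrightarrow> \<bar>w K x\<bar> \<le> Bw"
    using C10_form_coeffs(2)[OF w U] by blast
  define C where "C = 2 ^ CARD('m) * real (card {I::'n set. card I = p}) * Ba * Bw"
  have C0: "0 \<le> C" unfolding C_def using Ba0 Bw0 by simp
  have in_U: "AE x in ?M. x \<in> U" by (rule AE_I2) (simp add: space_restrict_space)
  have "(\<lambda>j. integral\<^sup>L ?M (\<lambda>x. pair_integrand p a w (fs j x) (wjac U (fs j) x) x))
      \<longlonglongrightarrow> integral\<^sup>L ?M (\<lambda>x. pair_integrand p a w (f x) (wjac U f x) x)"
  proof (rule integral_dominated_convergence[where w = "\<lambda>x. C * G x"])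
    show "(\<lambda>x. pair_integrand p a w (f x) (wjac U f x) x) \<in> borel_measurable ?M"
      "\<And>j. (\<lambda>x. pair_integrand p a w (fs j x) (wjac U (fs j) x) x) \<in> borel_measurable ?M"
      using W11_facts[OF U Wf] W11_facts[OF U Wj] C10_form_coeffs(1)[OF w U]
      by (auto intro!: pair_integrand_measurable a_cont)
    show "integrable ?M (\<lambda>x. C * G x)" using G by simp
    show "AE x in ?M. (\<lambda>j. pair_integrand p a w (fs j x) (wjac U (fs j) x) x)
        \<longlonglongrightarrow> pair_integrand p a w (f x) (wjac U f x) x"
      using cy cD by eventually_elim
        (use a_cont in \<open>auto intro!: pair_integrand_tendsto simp: continuous_on_eq_continuous_at\<close>)
    show "AE x in ?M. norm (pair_integrand p a w (fs j x) (wjac U (fs j) x) x) \<le> C * G x" for j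
      using dom in_U
    proof eventually_elim
      case (elim x)
      then have "\<bar>pair_integrand p a w (fs j x) (wjac U (fs j) x) x\<bar> \<le> C * lam p (wjac U (fs j) x)"
        using pair_integrand_bound[OF Ba Bw Bw0] by (simp add: C_def)
      also have "\<dots> \<le> C * G x" using elim(1) C0 by (intro mult_left_mono) auto
      finally show ?case by simp
    qed
  qed
  then show ?thesis unfolding pair_integral_eq set_integral_eq_on[OF U] .
qed

(* Common integrable majorant of |\<Lambda>^p f_j| plus a.e. convergence of f_j and
   Df_j give \<tau>^p convergence; the limit inherits the majorant pointwise. *)
lemma tau_conv_if_dominated:
  fixes f :: "(real,'m::{finite,linorder}) vec \<Rightarrow> (real,'n::{finite,linorder}) vec"
  assumes U: "U \<in> sets lebesgue" and W: "W11_conv U fs f"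
    and G: "integrable (lebesgue_on U) G"
    and dom: "AE x in lebesgue_on U. \<forall>j. lam p (wjac U (fs j) x) \<le> G x"
    and cy: "AE x in lebesgue_on U. (\<lambda>j. fs j x) \<longlonglongrightarrow> f x"
    and cD: "AE x in lebesgue_on U. \<forall>\<nu> \<mu>. (\<lambda>j. wjac U (fs j) x $ \<nu> $ \<mu>) \<longlonglongrightarrow> wjac U f x $ \<nu> $ \<mu>"
  shows "tau_conv p U fs f"
proof -
  have Wf: "W11 U f" and Wj: "\<And>j. W11 U (fs j)" using W by (auto simp: W11_conv_def)
  have dom_f: "AE x in lebesgue_on U. lam p (wjac U f x) \<le> G x"
    using dom cD
  proof eventually_elim
    case (elim x)
    have "(\<lambda>j. lam p (wjac U (fs j) x)) \<longlonglongrightarrow> lam p (wjac U f x)"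
      using elim(2) by (intro lam_tendsto) auto
    then show ?case using elim(1) by (intro LIMSEQ_le_const2) auto
  qed
  have "Fk p U (fs j)" for j
    using dom by (intro Fk_if_dominated[OF U Wj G]) (auto elim: AE_mp)
  moreover have "Fk p U f" by (rule Fk_if_dominated[OF U Wf G dom_f])
  ultimately show ?thesis
    using W pair_integral_tendsto[OF U Wf Wj G dom cy cD] unfolding tau_conv_def by blast
qed


section \<open>Extracting a good subsequence\<close>

lemma norm_le_sum_abs_entries:
  fixes A :: "real^'m::finite^'n::finite"
  shows "norm A \<le> (\<Sum>\<nu>\<in>UNIV. \<Sum>\<mu>\<in>UNIV. \<bar>A $ \<nu> $ \<mu>\<bar>)"
proof -
  have "norm A \<le> (\<Sum>\<nu>\<in>UNIV. norm (A $ \<nu>))" unfolding norm_vec_def by (rule L2_set_le_sum) simp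
  also have "\<dots> \<le> (\<Sum>\<nu>\<in>UNIV. \<Sum>\<mu>\<in>UNIV. \<bar>A $ \<nu> $ \<mu>\<bar>)" by (intro sum_mono norm_le_l1_cart)
  finally show ?thesis .
qed

lemma entry_le_norm:
  fixes A :: "real^'m::finite^'n::finite"
  shows "\<bar>A $ \<nu> $ \<mu>\<bar> \<le> norm A"
  using component_le_norm_cart[of "A $ \<nu>" \<mu>] Finite_Cartesian_Product.norm_nth_le[of A \<nu>] by linarith

lemma W11_error_integrable:
  assumes U: "U \<in> sets lebesgue" and f: "W11 U f" and g: "W11 U g"
  shows "integrable (lebesgue_on U) (\<lambda>x. norm (g x - f x) + norm (wjac U g x - wjac U f x))"
proof (rule Bochner_Integration.integrable_bound)
  let ?b = "\<lambda>x. (\<Sum>\<nu>\<in>UNIV. \<bar>g x $ \<nu> - f x $ \<nu>\<bar>) +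
      (\<Sum>\<nu>\<in>UNIV. \<Sum>\<mu>\<in>UNIV. \<bar>wjac U g x $ \<nu> $ \<mu> - wjac U f x $ \<nu> $ \<mu>\<bar>)"
  show "integrable (lebesgue_on U) ?b"
    using W11_facts[OF U f] W11_facts[OF U g]
    by (intro Bochner_Integration.integrable_add integrable_sum integrable_abs
        Bochner_Integration.integrable_diff) auto
  show "(\<lambda>x. norm (g x - f x) + norm (wjac U g x - wjac U f x)) \<in> borel_measurable (lebesgue_on U)"
    using W11_facts[OF U f] W11_facts[OF U g] by measurable
  show "AE x in lebesgue_on U. norm (norm (g x - f x) + norm (wjac U g x - wjac U f x)) \<le> norm (?b x)"
  proof (rule AE_I2)
    fix x
    have "norm (g x - f x) \<le> (\<Sum>\<nu>\<in>UNIV. \<bar>g x $ \<nu> - f x $ \<nu>\<bar>)"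
      using norm_le_l1_cart[of "g x - f x"] by simp
    moreover have "norm (wjac U g x - wjac U f x) \<le>
        (\<Sum>\<nu>\<in>UNIV. \<Sum>\<mu>\<in>UNIV. \<bar>wjac U g x $ \<nu> $ \<mu> - wjac U f x $ \<nu> $ \<mu>\<bar>)"
      using norm_le_sum_abs_entries[of "wjac U g x - wjac U f x"] by simp
    ultimately show "norm (norm (g x - f x) + norm (wjac U g x - wjac U f x)) \<le> norm (?b x)"
      by simp
  qed
qed

lemma W11_conv_subseq:
  assumes "strict_mono r" "W11_conv U fs f"
  shows "W11_conv U (\<lambda>j. fs (r j)) f"
  using assms LIMSEQ_subseq_LIMSEQ unfolding W11_conv_def by (auto simp: o_def)

lemma tendsto_if_norm_le_null:
  fixes X :: "nat \<Rightarrow> 'a::real_normed_vector"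
  assumes "\<And>j. norm (X j - l) \<le> e j" "e \<longlonglongrightarrow> 0"
  shows "X \<longlonglongrightarrow> l"
  using Lim_null_comparison[of "\<lambda>j. X j - l" e] assms by (auto intro: LIM_zero_cancel)

(* W^{1,1} convergence implies a.e. convergence of a subsequence, for the maps
   and for all entries of their weak Jacobians (L^1 convergence does). *)
lemma W11_conv_AE_subseq:
  assumes U: "U \<in> sets lebesgue" and W: "W11_conv U fs f"
  obtains r where "strict_mono r"
    and "AE x in lebesgue_on U. (\<lambda>j. fs (r j) x) \<longlonglongrightarrow> f x"
    and "AE x in lebesgue_on U. \<forall>\<nu> \<mu>. (\<lambda>j. wjac U (fs (r j)) x $ \<nu> $ \<mu>) \<longlonglongrightarrow> wjac U f x $ \<nu> $ \<mu>"
proof -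
  define h where "h j x = norm (fs j x - f x) + norm (wjac U (fs j) x - wjac U f x)" for j x
  have h_int: "integrable (lebesgue_on U) (h j)" for j
    using W U unfolding W11_conv_def h_def by (blast intro: W11_error_integrable)
  have "(\<lambda>j. \<integral>x. norm (h j x) \<partial>lebesgue_on U) \<longlonglongrightarrow> 0"
    using W unfolding W11_conv_def h_def set_integral_eq_on[OF U] by simp
  then obtain r where r: "strict_mono r" and h_lim: "AE x in lebesgue_on U. (\<lambda>j. h (r j) x) \<longlonglongrightarrow> 0"
    using tendsto_L1_AE_subseq[of "lebesgue_on U" h] h_int by blast
  have "AE x in lebesgue_on U. (\<lambda>j. fs (r j) x) \<longlonglongrightarrow> f x"
    using h_lim by eventually_elim (rule tendsto_if_norm_le_null; simp add: h_def)
  moreover have "AE x in lebesgue_on U.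
      \<forall>\<nu> \<mu>. (\<lambda>j. wjac U (fs (r j)) x $ \<nu> $ \<mu>) \<longlonglongrightarrow> wjac U f x $ \<nu> $ \<mu>"
    using h_lim
  proof eventually_elim
    case (elim x)
    have entry: "norm (wjac U (fs (r j)) x $ \<nu> $ \<mu> - wjac U f x $ \<nu> $ \<mu>) \<le> h (r j) x" for j \<nu> \<mu>
      using entry_le_norm[of "wjac U (fs (r j)) x - wjac U f x" \<nu> \<mu>]
        norm_ge_zero[of "fs (r j) x - f x"]
      unfolding h_def real_norm_def vector_minus_component by linarith
    show ?case
      by (intro allI tendsto_if_norm_le_null[OF entry elim])
  qed
  ultimately show thesis using r that by blast
qed

(* A sequence whose pointwise supremum has finite integral admits an
   integrable common majorant, namely that supremum itself. *)
lemma SUP_integral_majorant: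
  fixes g :: "nat \<Rightarrow> 'a \<Rightarrow> real"
  assumes meas: "\<And>j. g j \<in> borel_measurable M"
    and fin: "(\<integral>\<^sup>+ x. (SUP j. ennreal (g j x)) \<partial>M) < \<infinity>"
  obtains G where "integrable M G" and "AE x in M. \<forall>j. g j x \<le> G x"
proof
  define S where "S x = (SUP j. ennreal (g j x))" for x
  have S_meas: "S \<in> borel_measurable M"
    unfolding S_def using meas by measurable
  show "integrable M (\<lambda>x. enn2real (S x))"
  proof (rule integrableI_bounded)
    show "(\<lambda>x. enn2real (S x)) \<in> borel_measurable M" using S_meas by measurable
    have "(\<integral>\<^sup>+ x. ennreal (norm (enn2real (S x))) \<partial>M) \<le> integral\<^sup>N M S"
      by (intro nn_integral_mono) (simp add: ennreal_enn2real_if)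
    then show "(\<integral>\<^sup>+ x. ennreal (norm (enn2real (S x))) \<partial>M) < \<infinity>"
      using fin unfolding S_def by order
  qed
  have "AE x in M. S x \<noteq> \<infinity>"
    using nn_integral_noteq_infinite[OF S_meas] fin unfolding S_def by simp
  then show "AE x in M. \<forall>j. g j x \<le> enn2real (S x)"
  proof eventually_elim
    case (elim x)
    show ?case
    proof
      fix j
      have "ennreal (g j x) \<le> S x" unfolding S_def by (rule SUP_upper) simp
      then have le: "enn2real (ennreal (g j x)) \<le> enn2real (S x)"
        using elim by (intro enn2real_mono) (auto simp: top.not_eq_extremum)
      show "g j x \<le> enn2real (S x)"
      proof (cases "0 \<le> g j x")
        case True
        then show ?thesis using le by simp
      next
        case False
        moreover have "0 \<le> enn2real (S x)" by (rule enn2real_nonneg)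
        ultimately show ?thesis by linarith
      qed
    qed
  qed
qed


lemma dagger_stable_if_dominated:
  fixes f :: "(real,'m::{finite,linorder}) vec \<Rightarrow> (real,'n::{finite,linorder}) vec"
  assumes U: "U \<in> sets lebesgue" and k: "k < CARD('n)"
    and C1: "\<And>j. C1_on U (fs j)" and W: "W11_conv U fs f"
    and G: "integrable (lebesgue_on U) G"
    and dom: "AE x in lebesgue_on U. \<forall>j. lam k (wjac U (fs j) x) + lam (Suc k) (wjac U (fs j) x) \<le> G x"
    and cy: "AE x in lebesgue_on U. (\<lambda>j. fs j x) \<longlonglongrightarrow> f x"
    and cD: "AE x in lebesgue_on U. \<forall>\<nu> \<mu>. (\<lambda>j. wjac U (fs j) x $ \<nu> $ \<mu>) \<longlonglongrightarrow> wjac U f x $ \<nu> $ \<mu>"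
  shows "dagger_stable k U f"
proof -
  have tau: "tau_conv p U fs f" if "p \<in> {k, Suc k}" for p
  proof (rule tau_conv_if_dominated[OF U W G _ cy cD])
    show "AE x in lebesgue_on U. \<forall>j. lam p (wjac U (fs j) x) \<le> G x"
      using dom
    proof eventually_elim
      case (elim x)
      have "lam p (wjac U (fs j) x) \<le> lam k (wjac U (fs j) x) + lam (Suc k) (wjac U (fs j) x)" for j
        using that lam_nonneg[of k "wjac U (fs j) x"] lam_nonneg[of "Suc k" "wjac U (fs j) x"] by auto
      then show ?case using elim by (blast intro: order_trans)
    qed
  qed
  then have tau_k: "tau_conv k U fs f" and tau_Sk: "tau_conv (Suc k) U fs f" by simp_all
  then have "Fk k U f" "Fk (Suc k) U f" "\<And>j. Fk k U (fs j)" "\<And>j. Fk (Suc k) U (fs j)"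
    unfolding tau_conv_def by simp_all
  then show ?thesis
    using k C1 tau_k tau_Sk unfolding dagger_stable_def by (auto intro!: exI[of _ fs])
qed


theorem mainTheorem7:
  fixes U :: "((real, 'm::{finite,linorder}) vec) set"
    and f :: "(real, 'm) vec \<Rightarrow> (real, 'n::{finite,linorder}) vec"
    and k :: nat
  assumes "open U" and "connected U" and "bounded U"
    and "k < CARD('n)"
    and "W11 U f"
    and "(INF fs \<in> {fs. (\<forall>j. C1_on U (fs j)) \<and> W11_conv U fs f}.
           (\<integral>\<^sup>+ x \<in> U. (SUP j. ennreal (lam k (wjac U (fs j) x) + lam (Suc k) (wjac U (fs j) x))) \<partial>lebesgue))
         < \<infinity>"
  shows "dagger_stable k U f"
proof -
  have U: "U \<in> sets lebesgue" using \<open>open U\<close> by (rule open_sets_lebesgue)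
  define g where "g (fs :: nat \<Rightarrow> (real,'m) vec \<Rightarrow> (real,'n) vec) j x =
      lam k (wjac U (fs j) x) + lam (Suc k) (wjac U (fs j) x)" for fs j x
  obtain fs where C1: "\<And>j. C1_on U (fs j)" and W: "W11_conv U fs f"
    and fin: "(\<integral>\<^sup>+ x. (SUP j. ennreal (g fs j x)) \<partial>lebesgue_on U) < \<infinity>"
    using assms(6) unfolding INF_less_iff g_def set_nn_integral_eq_on[OF U] by blast
  have "g fs j \<in> borel_measurable (lebesgue_on U)" for j
    using W W11_facts(3)[OF U] unfolding g_def W11_conv_def
    by (auto intro!: borel_measurable_add lam_measurable)
  then obtain G where G: "integrable (lebesgue_on U) G" and dom: "AE x in lebesgue_on U. \<forall>j. g fs j x \<le> G x"
    using SUP_integral_majorant fin by blast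
  obtain r where r: "strict_mono r" and cy: "AE x in lebesgue_on U. (\<lambda>j. fs (r j) x) \<longlonglongrightarrow> f x"
    and cD: "AE x in lebesgue_on U. \<forall>\<nu> \<mu>. (\<lambda>j. wjac U (fs (r j)) x $ \<nu> $ \<mu>) \<longlonglongrightarrow> wjac U f x $ \<nu> $ \<mu>"
    using W11_conv_AE_subseq[OF U W] by blast
  have "AE x in lebesgue_on U. \<forall>j. g fs (r j) x \<le> G x" using dom by (rule AE_mp) auto
  then show ?thesis
    using dagger_stable_if_dominated[OF U assms(4) C1 W11_conv_subseq[OF r W] G _ cy cD]
    unfolding g_def by blast
qed
end
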